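(* Let $A$ be a finite set with $|A|\ge3$. The minimal u-closed monoids $M\le A^A$ are exactly the monoids of the form $M_f=\langle f\rangle\cup C$ where $f\in A^A\setminus T$ satisfies one of: (I) $f^2=f$; (II$'$) $f^2$ is a constant and $|A|\ge4$; (III$'$) $f^p=\mathrm{id}_A$ for some prime $p$, and $f$ has at least two fixed points or $f$ has at least two cycles of length $p$. In particular, every minimal u-closed monoid is $C$-minimal.
   Context: $C$ is the set of all constant unary maps on $A$, $T=\{\mathrm{id}_A\}\cup C$, and $\langle f\rangle$ is the submonoid of $A^A$ generated by $f$. A translation of an $n$-ary operation $g$ on $A$ is $x\mapsto g(a_1,\dots,a_{i-1},x,a_{i+1},\dots,a_n)$ with fixed $a_j\in A$; $\mathrm{trl}(g)$ is the set of translations ($\{g\}$ for unary $g$); $N^*:=\{g\mid\mathrm{trl}(g)\subseteq N\}$ for $N\subseteq A^A$. The u-closure $\overline M$ of $M\subseteq A^A$ is the intersection of all monoids $N$ with $M\subseteq N\le A^A$ such that $N^*$ is a clone; $M$ is u-closed if $\overline M=M$. A minimal u-closed monoid is a u-closed monoid $M\le A^A$ with $T\subsetneq M$ such that every u-closed monoid properly contained in $M$ equals $T$. A monoid $M\le A^A$ is $C$-minimal if $T\subsetneq M$ and there is no monoid $N$ with $T\subsetneq N\subsetneq M$. *)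

theory Defs
  imports "HOL-Computational_Algebra.Primes"
begin

text \<open>Unary maps on A are functions 'a => 'a; A is the (finite) universe of type 'a.
  A finitary operation of arity n >= 1 is a pair (n, g) with g :: 'a list => 'a,
  of which only the values on lists of length n are relevant.\<close>

definition is_monoid :: "('a \<Rightarrow> 'a) set \<Rightarrow> bool" where
  "is_monoid M \<longleftrightarrow> id \<in> M \<and> (\<forall>f\<in>M. \<forall>g\<in>M. f \<circ> g \<in> M)"

definition consts_maps :: "('a \<Rightarrow> 'a) set" ("\<C>") where
  "consts_maps = range (\<lambda>c. \<lambda>_. c)"

definition T_maps :: "('a \<Rightarrow> 'a) set" ("\<T>") where
  "T_maps = insert id consts_maps"

definition gen_monoid :: "('a \<Rightarrow> 'a) \<Rightarrow> ('a \<Rightarrow> 'a) set" where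
  "gen_monoid f = range (\<lambda>n. f ^^ n)"

definition trl :: "nat \<Rightarrow> ('a list \<Rightarrow> 'a) \<Rightarrow> ('a \<Rightarrow> 'a) set" where
  "trl n g = {(\<lambda>x. g (as[i := x])) | as i. length as = n \<and> i < n}"

definition star :: "('a \<Rightarrow> 'a) set \<Rightarrow> (nat \<times> ('a list \<Rightarrow> 'a)) set" where
  "star N = {(n, g). 1 \<le> n \<and> trl n g \<subseteq> N}"

definition is_clone :: "(nat \<times> ('a list \<Rightarrow> 'a)) set \<Rightarrow> bool" where
  "is_clone Cl \<longleftrightarrow>
     (\<forall>(n, g) \<in> Cl. 1 \<le> n) \<and>
     (\<forall>n i. 1 \<le> n \<longrightarrow> i < n \<longrightarrow> (n, \<lambda>xs. xs ! i) \<in> Cl) \<and>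
     (\<forall>n m f gs. (n, f) \<in> Cl \<longrightarrow> 1 \<le> m \<longrightarrow> (\<forall>i<n. (m, gs i) \<in> Cl) \<longrightarrow>
        (m, \<lambda>xs. f (map (\<lambda>i. gs i xs) [0..<n])) \<in> Cl)"

definition u_closure :: "('a \<Rightarrow> 'a) set \<Rightarrow> ('a \<Rightarrow> 'a) set" where
  "u_closure M = \<Inter>{N. M \<subseteq> N \<and> is_monoid N \<and> is_clone (star N)}"

definition u_closed :: "('a \<Rightarrow> 'a) set \<Rightarrow> bool" where
  "u_closed M \<longleftrightarrow> u_closure M = M"

definition minimal_u_closed :: "('a \<Rightarrow> 'a) set \<Rightarrow> bool" where
  "minimal_u_closed M \<longleftrightarrow> is_monoid M \<and> u_closed M \<and> \<T> \<subset> M \<and>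
     (\<forall>N. is_monoid N \<and> u_closed N \<and> N \<subset> M \<longrightarrow> N = \<T>)"

definition C_minimal :: "('a \<Rightarrow> 'a) set \<Rightarrow> bool" where
  "C_minimal M \<longleftrightarrow> is_monoid M \<and> \<T> \<subset> M \<and>
     \<not> (\<exists>N. is_monoid N \<and> \<T> \<subset> N \<and> N \<subset> M)"

definition M_of :: "('a \<Rightarrow> 'a) \<Rightarrow> ('a \<Rightarrow> 'a) set" where
  "M_of f = gen_monoid f \<union> \<C>"

definition orbit_of :: "('a \<Rightarrow> 'a) \<Rightarrow> 'a \<Rightarrow> 'a set" where
  "orbit_of f x = range (\<lambda>n. (f ^^ n) x)"

definition cycles_of_length :: "('a \<Rightarrow> 'a) \<Rightarrow> nat \<Rightarrow> 'a set set" where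
  "cycles_of_length f p = {orbit_of f x | x. card (orbit_of f x) = p}"

end

(* For a monoid N containing the identity and the constants, the operations all of whose
   translations lie in N form a clone exactly when N is diagonally closed: whenever all rows
   h a and all columns (\<lambda>x. h x b) of a binary operation h lie in N, so does its diagonal.

   Sufficiency: for f of type (I) or (II') the monoid M_f is {id, f} \<union> C, and a case analysis
   of rows and columns shows that the diagonal is id, f or constant. For f of type (III'), a
   binary h with a non-constant row and a non-constant column squeezes all but one point into a
   single orbit of f, which the hypothesis excludes. Every non-trivial element of M_f has f
   among its powers, so M_f is C-minimal.

   Necessity: let g be non-trivial in a minimal u-closed M; by minimality M = M_f for every
   f of type (I), (II') or (III') in M - T. If g is not injective, one of its powers is
   idempotent or has constant square (on three points the latter yields an idempotent by a
   diagonal). If g is injective, some power has prime order p; if it had at most one fixed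
   point and one p-cycle, then diagonals of the maps "multiply by k" on the p-cycle would give a
   non-injective non-constant element, and M would be generated by a non-injective map, which
   has no injective non-trivial powers. *)

theory Submission
  imports Defs "HOL-Combinatorics.Cycles" "HOL-Number_Theory.Cong"
begin

lemma const_mem_consts_maps [simp]: "(\<lambda>_. c) \<in> \<C>"
  by (simp add: consts_maps_def)

lemma mem_consts_maps_iff: "g \<in> \<C> \<longleftrightarrow> (\<exists>c. g = (\<lambda>_. c))"
  by (auto simp: consts_maps_def)

lemma mem_T_maps_iff: "g \<in> \<T> \<longleftrightarrow> g = id \<or> g \<in> \<C>"
  by (simp add: T_maps_def)

lemma T_maps_subsetD:
  assumes "\<T> \<subseteq> N"
  shows "id \<in> N" "(\<lambda>_. c) \<in> N"
  using assms by (auto simp: T_maps_def)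

lemma monoid_id: "is_monoid N \<Longrightarrow> id \<in> N"
  by (simp add: is_monoid_def)

lemma monoid_comp: "is_monoid N \<Longrightarrow> f \<in> N \<Longrightarrow> g \<in> N \<Longrightarrow> f \<circ> g \<in> N"
  by (simp add: is_monoid_def)

lemma monoid_funpow: "is_monoid N \<Longrightarrow> f \<in> N \<Longrightarrow> f ^^ n \<in> N"
  by (induction n) (auto simp: monoid_id monoid_comp)

lemma card_ge_2_obtain:
  assumes "finite S" "card S \<ge> 2"
  obtains a b where "a \<in> S" "b \<in> S" "a \<noteq> b"
  using assms card_le_Suc0_iff_eq[OF assms(1)] by fastforce

lemma trl_memI: "length as = n \<Longrightarrow> i < n \<Longrightarrow> (\<lambda>x. g (as[i := x])) \<in> trl n g"
  unfolding trl_def by blast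

section \<open>Clones of translations and diagonal closure\<close>

text \<open>The rows h a and the columns (\<lambda>x. h x b) of a binary h are exactly its translations.\<close>

definition diag_closed :: "('a \<Rightarrow> 'a) set \<Rightarrow> bool" where
  "diag_closed N \<longleftrightarrow>
     (\<forall>h. (\<forall>a. h a \<in> N) \<longrightarrow> (\<forall>b. (\<lambda>x. h x b) \<in> N) \<longrightarrow> (\<lambda>x. h x x) \<in> N)"

lemma diag_closedD:
  "diag_closed N \<Longrightarrow> (\<And>a. h a \<in> N) \<Longrightarrow> (\<And>b. (\<lambda>x. h x b) \<in> N) \<Longrightarrow> (\<lambda>x. h x x) \<in> N"
  unfolding diag_closed_def by blast

lemma diag_closed_Inter: "(\<And>N. N \<in> F \<Longrightarrow> diag_closed N) \<Longrightarrow> diag_closed (\<Inter>F)"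
  unfolding diag_closed_def by blast

lemma comp_mem_if_trl_subset:
  assumes mon: "is_monoid N" and TN: "\<T> \<subseteq> N" and dc: "diag_closed N"
  shows "trl n f \<subseteq> N \<Longrightarrow> (\<And>i. i < n \<Longrightarrow> t i \<in> N) \<Longrightarrow>
    (\<lambda>x. f (map (\<lambda>i. t i x) [0..<n])) \<in> N"
proof (induction n arbitrary: f)
  case 0
  then show ?case using T_maps_subsetD(2)[OF TN] by simp
next
  case (Suc n)
  \<comment> \<open>Separate the first n arguments from the last one and take the diagonal.\<close>
  define h where "h = (\<lambda>x y. f (map (\<lambda>i. t i x) [0..<n] @ [t n y]))"
  have "h a \<in> N" for a
  proof -
    define as where "as = map (\<lambda>i. t i a) [0..<n] @ [t n a]"
    have "(\<lambda>z. f (as[n := z])) \<in> N"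
      using Suc.prems(1) trl_memI[of as "Suc n" n f] by (auto simp: as_def)
    moreover have "h a = (\<lambda>z. f (as[n := z])) \<circ> t n"
      by (auto simp: h_def as_def fun_eq_iff list_update_append)
    ultimately show ?thesis using monoid_comp[OF mon _ Suc.prems(2)[of n]] by simp
  qed
  moreover have "(\<lambda>x. h x b) \<in> N" for b
  proof -
    have "trl n (\<lambda>ys. f (ys @ [t n b])) \<subseteq> N"
    proof
      fix k assume "k \<in> trl n (\<lambda>ys. f (ys @ [t n b]))"
      then obtain as i where k: "k = (\<lambda>x. f (as[i := x] @ [t n b]))" "length as = n" "i < n"
        unfolding trl_def by blast
      then have "k \<in> trl (Suc n) f"
        using trl_memI[of "as @ [t n b]" "Suc n" i f] by (simp add: list_update_append1)
      then show "k \<in> N" using Suc.prems(1) by blast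
    qed
    then show ?thesis using Suc.IH Suc.prems(2) by (simp add: h_def)
  qed
  ultimately have "(\<lambda>x. h x x) \<in> N" using diag_closedD[OF dc] by blast
  then show ?case by (simp add: h_def)
qed

lemma clone_star_if_diag_closed:
  assumes mon: "is_monoid N" and TN: "\<T> \<subseteq> N" and dc: "diag_closed N"
  shows "is_clone (star N)"
  unfolding is_clone_def
proof (intro conjI allI impI)
  show "\<forall>(n, g)\<in>star N. 1 \<le> n" by (auto simp: star_def)
next
  fix n i :: nat assume n: "1 \<le> n" and i: "i < n"
  have "trl n (\<lambda>xs::'a list. xs ! i) \<subseteq> N"
  proof
    fix k assume "k \<in> trl n (\<lambda>xs::'a list. xs ! i)"
    then obtain as j where "k = (\<lambda>x. as[j := x] ! i)" "length as = n"
      unfolding trl_def by blast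
    then have "k = id \<or> k = (\<lambda>_. as ! i)" using i by (cases "j = i") (auto simp: fun_eq_iff)
    then show "k \<in> N" using T_maps_subsetD[OF TN] by blast
  qed
  then show "(n, \<lambda>xs. xs ! i) \<in> star N" using n by (simp add: star_def)
next
  fix n m :: nat and f :: "'a list \<Rightarrow> 'a" and gs :: "nat \<Rightarrow> 'a list \<Rightarrow> 'a"
  assume f: "(n, f) \<in> star N" and m: "1 \<le> m" and gs: "\<forall>i<n. (m, gs i) \<in> star N"
  have "trl m (\<lambda>xs. f (map (\<lambda>i. gs i xs) [0..<n])) \<subseteq> N"
  proof
    fix k assume "k \<in> trl m (\<lambda>xs. f (map (\<lambda>i. gs i xs) [0..<n]))"
    then obtain as j where k: "k = (\<lambda>x. f (map (\<lambda>i. gs i (as[j := x])) [0..<n]))"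
        "length as = m" "j < m"
      unfolding trl_def by blast
    have "(\<lambda>x. gs i (as[j := x])) \<in> N" if "i < n" for i
      using gs that trl_memI[OF k(2,3)] by (auto simp: star_def)
    moreover have "trl n f \<subseteq> N" using f by (simp add: star_def)
    ultimately show "k \<in> N"
      using comp_mem_if_trl_subset[OF mon TN dc, of n f "\<lambda>i x. gs i (as[j := x])"] k(1) by simp
  qed
  then show "(m, \<lambda>xs. f (map (\<lambda>i. gs i xs) [0..<n])) \<in> star N"
    using m by (simp add: star_def)
qed

lemma clone_projD: "is_clone Cl \<Longrightarrow> 1 \<le> n \<Longrightarrow> i < n \<Longrightarrow> (n, \<lambda>xs. xs ! i) \<in> Cl"
  unfolding is_clone_def by blast

lemma clone_compD:
  "is_clone Cl \<Longrightarrow> (n, f) \<in> Cl \<Longrightarrow> 1 \<le> m \<Longrightarrow> (\<And>i. i < n \<Longrightarrow> (m, gs i) \<in> Cl) \<Longrightarrow>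
    (m, \<lambda>xs. f (map (\<lambda>i. gs i xs) [0..<n])) \<in> Cl"
  unfolding is_clone_def by blast

lemma unary_mem_if_star_mem:
  assumes "(1, g) \<in> star N"
  shows "(\<lambda>x. g [x]) \<in> N"
proof -
  have "(\<lambda>x. g ([undefined][0 := x])) \<in> trl 1 g" by (rule trl_memI) auto
  then show ?thesis using assms by (auto simp: star_def)
qed

lemma T_maps_subset_if_clone_star:
  assumes cl: "is_clone (star N)"
  shows "\<T> \<subseteq> N"
proof -
  have "id \<in> N"
    using unary_mem_if_star_mem[OF clone_projD[OF cl, of 1 0]] by (simp add: id_def)
  moreover have "(\<lambda>_. c) \<in> N" for c
  proof -
    have "(\<lambda>x. [c, c][1 := x] ! 0) \<in> trl 2 (\<lambda>xs. xs ! 0)" by (rule trl_memI) auto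
    then show ?thesis using clone_projD[OF cl, of 2 0] by (auto simp: star_def)
  qed
  ultimately show ?thesis by (auto simp: T_maps_def consts_maps_def)
qed

lemma diag_closed_if_clone_star:
  assumes cl: "is_clone (star N)"
  shows "diag_closed N"
  unfolding diag_closed_def
proof (intro allI impI)
  fix h :: "'a \<Rightarrow> 'a \<Rightarrow> 'a" assume rows: "\<forall>a. h a \<in> N" and cols: "\<forall>b. (\<lambda>x. h x b) \<in> N"
  define g where "g = (\<lambda>xs. h (xs ! 0) (xs ! 1))"
  have "trl 2 g \<subseteq> N"
  proof
    fix k assume "k \<in> trl 2 g"
    then obtain as i where k: "k = (\<lambda>x. g (as[i := x]))" "length as = 2" "i < 2"
      unfolding trl_def by blast
    then obtain a0 a1 where "as = [a0, a1]"
      by (auto simp: length_Suc_conv numeral_2_eq_2)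
    then have "k = (\<lambda>x. h x a1) \<or> k = h a0"
      using k by (auto simp: g_def less_2_cases_iff fun_eq_iff)
    then show "k \<in> N" using rows cols by auto
  qed
  then have "(2, g) \<in> star N" by (simp add: star_def)
  then have "(1, \<lambda>xs. g (map (\<lambda>i. xs ! 0) [0..<2])) \<in> star N"
    using clone_compD[OF cl, of 2 g 1 "\<lambda>_ xs. xs ! 0"] clone_projD[OF cl, of 1 0] by simp
  from unary_mem_if_star_mem[OF this] show "(\<lambda>x. h x x) \<in> N"
    by (simp add: g_def upt_rec)
qed

lemma u_closed_iff_diag_closed:
  assumes "is_monoid M"
  shows "u_closed M \<longleftrightarrow> \<T> \<subseteq> M \<and> diag_closed M"
proof -
  let ?F = "{N. M \<subseteq> N \<and> is_monoid N \<and> is_clone (star N)}"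
  have "\<T> \<subseteq> \<Inter>?F" using T_maps_subset_if_clone_star by blast
  moreover have "diag_closed (\<Inter>?F)" using diag_closed_if_clone_star by (intro diag_closed_Inter) blast
  moreover have "\<Inter>?F = M" if "\<T> \<subseteq> M" "diag_closed M"
    using assms that clone_star_if_diag_closed by blast
  ultimately show ?thesis unfolding u_closed_def u_closure_def by metis
qed

lemma mem_M_of_iff: "g \<in> M_of f \<longleftrightarrow> g \<in> \<C> \<or> (\<exists>n. g = f ^^ n)"
  by (auto simp: M_of_def gen_monoid_def)

lemma funpow_mem_M_of [simp]: "f ^^ n \<in> M_of f"
  by (auto simp: mem_M_of_iff)

lemma mem_M_of [simp]: "f \<in> M_of f"
  using funpow_mem_M_of[where n=1] by simp

lemma T_maps_subset_M_of: "\<T> \<subseteq> M_of f"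
  using funpow_mem_M_of[where n=0] by (auto simp: T_maps_def M_of_def)

lemma is_monoid_M_of: "is_monoid (M_of f)"
  unfolding is_monoid_def
proof (intro conjI ballI)
  show "id \<in> M_of f" using funpow_mem_M_of[where n=0] by simp
next
  fix g1 g2 assume "g1 \<in> M_of f" "g2 \<in> M_of f"
  then consider "g2 \<in> \<C>" | "g1 \<in> \<C>" | m n where "g1 = f ^^ m" "g2 = f ^^ n"
    by (auto simp: mem_M_of_iff)
  then show "g1 \<circ> g2 \<in> M_of f"
  proof cases
    case (3 m n)
    then show ?thesis using funpow_mem_M_of[where n="m + n"] by (simp add: funpow_add)
  qed (auto simp: mem_M_of_iff mem_consts_maps_iff comp_def)
qed

lemma M_of_subset:
  assumes "is_monoid N" "\<T> \<subseteq> N" "f \<in> N"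
  shows "M_of f \<subseteq> N"
  using assms monoid_funpow T_maps_subsetD(2) by (auto simp: mem_M_of_iff mem_consts_maps_iff)

lemma M_of_eq_if_square:
  assumes "f \<circ> f = f \<or> f \<circ> f \<in> \<C>"
  shows "M_of f = {id, f} \<union> \<C>"
proof -
  have "f ^^ n \<in> {id, f} \<union> \<C>" for n
  proof (induction n)
    case (Suc n)
    then consider "f ^^ n = id" | "f ^^ n = f" | c where "f ^^ n = (\<lambda>_. c)"
      by (auto simp: mem_consts_maps_iff id_def)
    then show ?case
      by cases (use assms in \<open>auto simp: comp_def\<close>)
  qed simp
  then show ?thesis
    using T_maps_subset_M_of[of f] mem_M_of[of f] unfolding M_of_def gen_monoid_def T_maps_def
    by blast
qed

definition minimal_generator :: "('a::finite \<Rightarrow> 'a) \<Rightarrow> bool" where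
  "minimal_generator f \<longleftrightarrow>
     f \<circ> f = f
     \<or> (f \<circ> f \<in> \<C> \<and> card (UNIV :: 'a set) \<ge> 4)
     \<or> (\<exists>p. prime p \<and> f ^^ p = id \<and>
          (card {x. f x = x} \<ge> 2 \<or> card (cycles_of_length f p) \<ge> 2))"

section \<open>Diagonal closedness of M_of f\<close>

lemma diag_closedI_nonconst:
  assumes "\<And>h a b. (\<And>x. h x \<in> N) \<Longrightarrow> (\<And>y. (\<lambda>x. h x y) \<in> N) \<Longrightarrow>
    h a \<notin> \<C> \<Longrightarrow> (\<lambda>x. h x b) \<notin> \<C> \<Longrightarrow> (\<lambda>x. h x x) \<in> N"
  shows "diag_closed N"
  unfolding diag_closed_def
proof (intro allI impI)
  fix h :: "'a \<Rightarrow> 'a \<Rightarrow> 'a" assume rows: "\<forall>a. h a \<in> N" and cols: "\<forall>b. (\<lambda>x. h x b) \<in> N"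
  consider "\<forall>a. h a \<in> \<C>" | "\<forall>b. (\<lambda>x. h x b) \<in> \<C>" | a b where "h a \<notin> \<C>" "(\<lambda>x. h x b) \<notin> \<C>"
    by blast
  then show "(\<lambda>x. h x x) \<in> N"
  proof cases
    case 1
    then have "(\<lambda>x. h x x) = (\<lambda>x. h x undefined)"
      by (metis (no_types, lifting) mem_consts_maps_iff)
    then show ?thesis using cols by simp
  next
    case 2
    then have "(\<lambda>x. h x x) = h undefined"
      by (auto simp: fun_eq_iff mem_consts_maps_iff) metis
    then show ?thesis using rows by simp
  qed (use assms rows cols in blast)
qed

lemma diag_eq_id_if_row_id_idempotent:
  assumes f: "f \<circ> f = f" and cols: "\<And>y. (\<lambda>x. h x y) \<in> {id, f} \<union> \<C>" and row_id: "h a = id"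
  shows "(\<lambda>x. h x x) = id"
proof -
  \<comment> \<open>The column through y takes the value y at a, which pins down its value at y.\<close>
  have "h y y = y" for y
  proof -
    have hay: "h a y = y" using row_id by simp
    consider "(\<lambda>x. h x y) = id" | "(\<lambda>x. h x y) = f" | c where "(\<lambda>x. h x y) = (\<lambda>_. c)"
      using cols[of y] by (auto simp: mem_consts_maps_iff id_def)
    then show ?thesis
    proof cases
      case 1
      then show ?thesis using fun_cong[OF 1, of y] by simp
    next
      case 2
      then have "f a = y" "h y y = f y" using fun_cong[OF 2, of a] fun_cong[OF 2, of y] hay by auto
      then show ?thesis using f by (metis comp_apply)
    next
      case (3 c)
      then show ?thesis using fun_cong[OF 3, of a] fun_cong[OF 3, of y] hay by simp
    qed
  qed
  then show ?thesis by auto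
qed

lemma no_row_id_if_square_const:
  fixes h :: "'a::finite \<Rightarrow> 'a \<Rightarrow> 'a"
  assumes f: "f \<circ> f \<in> \<C>" and card4: "card (UNIV :: 'a set) \<ge> 4"
    and rows: "\<And>x. h x \<in> {id, f} \<union> \<C>" and cols: "\<And>y. (\<lambda>x. h x y) \<in> {id, f} \<union> \<C>"
    and row_id: "h a = id" and col: "(\<lambda>x. h x b) \<notin> \<C>"
  shows False
proof -
  obtain c where fc: "\<And>x. f (f x) = c" using f by (auto simp: mem_consts_maps_iff fun_eq_iff)
  have "card (UNIV - {a, f a}) \<ge> 2"
    using card4 card_Diff_subset[of "{a, f a}" UNIV] card_insert_le_m1[of 2 "{f a}" a] by simp
  then obtain s1 s2 where s: "s1 \<notin> {a, f a}" "s2 \<notin> {a, f a}" "s1 \<noteq> s2"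
    by (meson card_ge_2_obtain finite DiffD2)
  have col_const: "h x s = s" if "s \<notin> {a, f a}" for x s
  proof -
    have has: "h a s = s" using row_id by simp
    consider "(\<lambda>x. h x s) = id" | "(\<lambda>x. h x s) = f" | c where "(\<lambda>x. h x s) = (\<lambda>_. c)"
      using cols[of s] by (auto simp: mem_consts_maps_iff id_def)
    then show ?thesis
    proof cases
      case (3 c)
      then show ?thesis using fun_cong[OF 3, of a] fun_cong[OF 3, of x] has by simp
    qed (use has that in \<open>auto dest: fun_cong[of _ _ a]\<close>)
  qed
  have "h x \<notin> \<C>" for x
  proof
    assume "h x \<in> \<C>"
    then obtain c where "h x = (\<lambda>_. c)" by (auto simp: mem_consts_maps_iff)
    then show False using col_const[of s1 x] col_const[of s2 x] s by simp
  qed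
  then have "h x = id \<or> h x = f" for x using rows by auto
  moreover have "\<not> (\<forall>x. h x = id)"
  proof
    assume "\<forall>x. h x = id"
    then have "(\<lambda>x. h x b) = (\<lambda>_. b)" by simp
    then show False using col by simp
  qed
  ultimately obtain x1 where "h x1 = f" by blast
  then have "f s1 = s1" "f s2 = s2" using col_const s by auto
  then show False using fc[of s1] fc[of s2] s(3) by simp
qed

lemma diag_eq_id_if_row_id:
  fixes h :: "'a::finite \<Rightarrow> 'a \<Rightarrow> 'a"
  assumes "f \<circ> f = f \<or> (f \<circ> f \<in> \<C> \<and> card (UNIV :: 'a set) \<ge> 4)"
    and "\<And>x. h x \<in> {id, f} \<union> \<C>" "\<And>y. (\<lambda>x. h x y) \<in> {id, f} \<union> \<C>"
    and "h a = id" "(\<lambda>x. h x b) \<notin> \<C>"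
  shows "(\<lambda>x. h x x) = id"
proof (cases "f \<circ> f = f")
  case True
  show ?thesis by (rule diag_eq_id_if_row_id_idempotent[OF True assms(3,4)])
next
  case False
  then have "f \<circ> f \<in> \<C>" "card (UNIV :: 'a set) \<ge> 4" using assms(1) by auto
  from no_row_id_if_square_const[OF this assms(2-5)] show ?thesis ..
qed

lemma diag_closed_if_square:
  fixes f :: "'a::finite \<Rightarrow> 'a"
  assumes f: "f \<circ> f = f \<or> (f \<circ> f \<in> \<C> \<and> card (UNIV :: 'a set) \<ge> 4)"
  shows "diag_closed ({id, f} \<union> \<C>)"
proof (rule diag_closedI_nonconst)
  fix h :: "'a \<Rightarrow> 'a \<Rightarrow> 'a" and a b
  assume rows: "\<And>x. h x \<in> {id, f} \<union> \<C>" and cols: "\<And>y. (\<lambda>x. h x y) \<in> {id, f} \<union> \<C>"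
    and row: "h a \<notin> \<C>" and col: "(\<lambda>x. h x b) \<notin> \<C>"
  consider a' where "h a' = id" | b' where "(\<lambda>x. h x b') = id"
    | "\<forall>x. h x \<in> {f} \<union> \<C>" "(\<lambda>x. h x b) = f"
    using rows cols col by blast
  then show "(\<lambda>x. h x x) \<in> {id, f} \<union> \<C>"
  proof cases
    case (1 a')
    then show ?thesis using diag_eq_id_if_row_id[OF f rows cols _ col] by simp
  next
    case (2 b')
    then have "(\<lambda>x. (\<lambda>x y. h y x) x x) = id"
      using diag_eq_id_if_row_id[OF f cols rows, of b' a] row by simp
    then show ?thesis by simp
  next
    case 3
    \<comment> \<open>Every row is f or constant, and a constant row agrees with the column through b.\<close>
    have "h x x = f x" for x
    proof (cases "h x = f")
      case False
      then obtain c where "h x = (\<lambda>_. c)" using 3(1) by (auto simp: mem_consts_maps_iff)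
      then show ?thesis using fun_cong[OF 3(2), of x] by simp
    qed simp
    then show ?thesis by auto
  qed
qed

section \<open>Orbits of permutations\<close>

lemma permutation_if_funpow_eq_id:
  fixes f :: "'a::finite \<Rightarrow> 'a"
  assumes "f ^^ n = id" "0 < n"
  shows "permutation f"
proof -
  obtain m where n: "n = Suc m" using assms(2) by (cases n) auto
  have "f \<circ> f ^^ m = id" using assms(1) by (simp add: n)
  moreover have "f ^^ m \<circ> f = id" using assms(1) by (simp add: n funpow_Suc_right del: funpow.simps)
  ultimately show ?thesis by (simp add: permutation o_bij)
qed

lemma funpow_eq_funpow_iff_mod_least_power:
  assumes perm: "permutation f"
  shows "(f ^^ i) x = (f ^^ j) x \<longleftrightarrow> i mod least_power f x = j mod least_power f x"
proof -
  have inj: "inj f" using bij_is_inj[OF permutation_bijective[OF perm]] .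
  have *: "(f ^^ i) x = (f ^^ j) x \<longleftrightarrow> i mod least_power f x = j mod least_power f x"
    if "i \<le> j" for i j
  proof -
    have j: "f ^^ j = f ^^ i \<circ> f ^^ (j - i)" using that by (simp flip: funpow_add)
    have "(f ^^ i) x = (f ^^ j) x \<longleftrightarrow> (f ^^ (j - i)) x = x"
      using funpow_diff[OF inj that] j by auto
    also have "\<dots> \<longleftrightarrow> least_power f x dvd j - i" using least_power_dvd[OF perm] by simp
    also have "\<dots> \<longleftrightarrow> i mod least_power f x = j mod least_power f x"
      using mod_eq_dvd_iff_nat[OF that, of "least_power f x"] by argo
    finally show ?thesis .
  qed
  show ?thesis
    using *[of i j] *[of j i] nat_le_linear[of i j] by argo
qed

lemma funpow_fixed: "f x = x \<Longrightarrow> (f ^^ n) x = x"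
  by (induction n) auto

lemma funpow_commute_apply: "(f ^^ m) ((f ^^ n) x) = (f ^^ n) ((f ^^ m) x)"
proof -
  have "(f ^^ m) ((f ^^ n) x) = (f ^^ (m + n)) x" by (simp add: funpow_add)
  also have "\<dots> = (f ^^ (n + m)) x" by (simp add: add.commute)
  finally show ?thesis by (simp add: funpow_add)
qed

lemma funpow_mem_orbit_of [simp]: "(f ^^ n) x \<in> orbit_of f x"
  by (simp add: orbit_of_def)

lemma self_mem_orbit_of [simp]: "x \<in> orbit_of f x"
  using funpow_mem_orbit_of[where n=0] by simp

lemma orbit_of_fixed: "f u = u \<Longrightarrow> orbit_of f u = {u}"
  by (auto simp: orbit_of_def funpow_fixed)

lemma orbit_of_eq_if_mem:
  assumes f: "permutation f" and "y \<in> orbit_of f x"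
  shows "orbit_of f y = orbit_of f x"
proof -
  obtain k where y: "y = (f ^^ k) x" using assms(2) by (auto simp: orbit_of_def)
  define L where "L = least_power f x"
  have "L > 0" using least_power_of_permutation(2)[OF f] by (simp add: L_def)
  \<comment> \<open>Going once more around the cycle of x brings y back to any point of the orbit of x.\<close>
  have around: "(f ^^ (n + (L - 1) * k)) y = (f ^^ n) x" for n
  proof -
    have "n + k * L = n + (L - 1) * k + k"
      using \<open>L > 0\<close> by (cases L) (simp_all add: algebra_simps)
    then have "(f ^^ (n + (L - 1) * k)) y = (f ^^ (n + k * L)) x"
      by (simp only: y funpow_add comp_apply)
    then show ?thesis
      using funpow_eq_funpow_iff_mod_least_power[OF f, of "n + k * L" x n] by (simp add: L_def)
  qed
  have "(f ^^ n) y \<in> orbit_of f x" for n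
    using funpow_mem_orbit_of[where n="n + k" and x=x] by (simp add: y funpow_add)
  then have "orbit_of f y \<subseteq> orbit_of f x"
    unfolding orbit_of_def[of f y] by (intro image_subsetI)
  moreover have "(f ^^ n) x \<in> orbit_of f y" for n
    by (metis around funpow_mem_orbit_of)
  then have "orbit_of f x \<subseteq> orbit_of f y"
    unfolding orbit_of_def[of f x] by (intro image_subsetI)
  ultimately show ?thesis by (rule antisym)
qed

lemma card_orbit_of:
  assumes perm: "permutation f"
  shows "card (orbit_of f x) = least_power f x"
proof -
  have "orbit_of f x = set (support f x)" using support_set[OF perm] by (simp add: orbit_of_def)
  then show ?thesis using distinct_card[OF cycle_of_permutation[OF perm]] by simp
qed

lemma least_power_eq_prime:
  assumes p: "prime p" and fp: "f ^^ p = id" and fx: "f x \<noteq> x"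
  shows "least_power f x = p"
proof -
  have p0: "p > 0" and fpx: "(f ^^ p) x = x" using prime_gt_0_nat[OF p] fp by simp_all
  have "least_power f x \<noteq> 1"
    using least_powerI(1)[OF fpx p0] fx by auto
  moreover have "least_power f x dvd p" using least_power_minimal[OF fpx] .
  ultimately show ?thesis using p unfolding prime_nat_iff by blast
qed

lemma card_compl_orbit_of_ge_2:
  fixes f :: "'a::finite \<Rightarrow> 'a"
  assumes card3: "card (UNIV :: 'a set) \<ge> 3" and p: "prime p" and fp: "f ^^ p = id"
    and f: "card {x. f x = x} \<ge> 2 \<or> card (cycles_of_length f p) \<ge> 2"
  shows "card (- orbit_of f x) \<ge> 2"
proof -
  have perm: "permutation f" using permutation_if_funpow_eq_id[OF fp prime_gt_0_nat[OF p]] .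
  from f show ?thesis
  proof
    assume "card {x. f x = x} \<ge> 2"
    then obtain u v where uv: "f u = u" "f v = v" "u \<noteq> v"
      using card_ge_2_obtain[of "{x. f x = x}"] by auto
    have compl_singleton: "card (- {w}) \<ge> 2" for w :: 'a
      using card3 by (simp add: Compl_eq_Diff_UNIV card_Diff_singleton)
    have orbit_fixed: "orbit_of f x = {w}" if w: "w \<in> orbit_of f x" "f w = w" for w
      using orbit_of_eq_if_mem[OF perm w(1)] orbit_of_fixed[of f w] w(2) by simp
    consider "u \<in> orbit_of f x" | "v \<in> orbit_of f x" | "{u, v} \<subseteq> - orbit_of f x" by blast
    then show ?thesis
    proof cases
      case 1
      then show ?thesis using orbit_fixed[OF 1 uv(1)] compl_singleton by simp
    next
      case 2
      then show ?thesis using orbit_fixed[OF 2 uv(2)] compl_singleton by simp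
    next
      case 3
      then show ?thesis using card_mono[OF _ 3] uv(3) by simp
    qed
  next
    assume "card (cycles_of_length f p) \<ge> 2"
    then obtain O1 O2 where "O1 \<in> cycles_of_length f p" "O2 \<in> cycles_of_length f p" "O1 \<noteq> O2"
      by (meson card_ge_2_obtain finite)
    then obtain y where y: "orbit_of f y \<noteq> orbit_of f x" "card (orbit_of f y) = p"
      unfolding cycles_of_length_def by auto
    have "orbit_of f y \<subseteq> - orbit_of f x"
    proof
      fix z assume z: "z \<in> orbit_of f y"
      show "z \<in> - orbit_of f x"
        using orbit_of_eq_if_mem[OF perm z] orbit_of_eq_if_mem[OF perm, of z x] y(1) by auto
    qed
    then have "card (orbit_of f y) \<le> card (- orbit_of f x)" by (simp add: card_mono)
    then show ?thesis using y(2) prime_ge_2_nat[OF p] by simp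
  qed
qed

lemma orbit_of_eq_if_translations_not_const:
  assumes perm: "permutation f"
    and "h x \<in> M_of f" "(\<lambda>z. h z y) \<in> M_of f" "h x \<notin> \<C>" "(\<lambda>z. h z y) \<notin> \<C>"
  shows "orbit_of f x = orbit_of f y"
proof -
  obtain n m where "h x = f ^^ n" "(\<lambda>z. h z y) = f ^^ m"
    using assms(2-5) by (auto simp: mem_M_of_iff)
  then have "h x y \<in> orbit_of f y" "h x y \<in> orbit_of f x"
    by (metis funpow_mem_orbit_of)+
  then show ?thesis using orbit_of_eq_if_mem[OF perm] by metis
qed

lemma translations_const_if_M_of_prime_order:
  fixes f :: "'a::finite \<Rightarrow> 'a"
  assumes card3: "card (UNIV :: 'a set) \<ge> 3" and p: "prime p" and fp: "f ^^ p = id"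
    and f: "card {x. f x = x} \<ge> 2 \<or> card (cycles_of_length f p) \<ge> 2"
    and rows: "\<And>x. h x \<in> M_of f" and cols: "\<And>y. (\<lambda>x. h x y) \<in> M_of f"
  shows "(\<forall>a. h a \<in> \<C>) \<or> (\<forall>b. (\<lambda>x. h x b) \<in> \<C>)"
proof (rule ccontr)
  have perm: "permutation f" using permutation_if_funpow_eq_id[OF fp prime_gt_0_nat[OF p]] .
  note same_orbit = orbit_of_eq_if_translations_not_const[OF perm rows cols]
  assume "\<not> ?thesis"
  then obtain a b where a: "h a \<notin> \<C>" and b: "(\<lambda>x. h x b) \<notin> \<C>" by blast
  define Ob where "Ob = orbit_of f a"
  have row_const: "h x \<in> \<C>" if "x \<notin> Ob" for x
  proof (rule ccontr)
    assume "h x \<notin> \<C>"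
    then have "orbit_of f x = Ob" using same_orbit[OF _ b] same_orbit[OF a b] by (simp add: Ob_def)
    then show False using that self_mem_orbit_of[of x f] by simp
  qed
  have col_const: "(\<lambda>x. h x y) \<in> \<C>" if "y \<notin> Ob" for y
  proof (rule ccontr)
    assume "(\<lambda>x. h x y) \<notin> \<C>"
    then have "orbit_of f y = Ob" using same_orbit[OF a] by (simp add: Ob_def)
    then show False using that self_mem_orbit_of[of y f] by simp
  qed
  obtain m where m: "(\<lambda>x. h x b) = f ^^ m" using cols[of b] b by (auto simp: mem_M_of_iff)
  \<comment> \<open>Outside the orbit of a all translations are constant, which leaves room for one point only.\<close>
  have "x = x'" if x: "x \<notin> Ob" and x': "x' \<notin> Ob" for x x'
  proof -
    obtain k k' c where "h x = (\<lambda>_. k)" "h x' = (\<lambda>_. k')" "(\<lambda>z. h z x') = (\<lambda>_. c)"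
      using row_const[OF x] row_const[OF x'] col_const[OF x'] by (auto simp: mem_consts_maps_iff)
    then have "h x b = h x' b"
      using fun_cong[of "\<lambda>z. h z x'" "\<lambda>_. c" x] fun_cong[of "\<lambda>z. h z x'" "\<lambda>_. c" x'] by simp
    then have "(f ^^ m) x = (f ^^ m) x'" using fun_cong[OF m, of x] fun_cong[OF m, of x'] by simp
    then show ?thesis using inj_fn[OF bij_is_inj[OF permutation_bijective[OF perm]]]
      by (simp add: inj_eq)
  qed
  moreover obtain y z where "y \<notin> Ob" "z \<notin> Ob" "y \<noteq> z"
    using card_compl_orbit_of_ge_2[OF card3 p fp f, of a] card_ge_2_obtain[of "- Ob"]
    by (auto simp: Ob_def)
  ultimately show False by blast
qed

lemma diag_closed_M_of_prime_order:
  fixes f :: "'a::finite \<Rightarrow> 'a"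
  assumes "card (UNIV :: 'a set) \<ge> 3" "prime p" "f ^^ p = id"
    "card {x. f x = x} \<ge> 2 \<or> card (cycles_of_length f p) \<ge> 2"
  shows "diag_closed (M_of f)"
proof (rule diag_closedI_nonconst)
  fix h :: "'a \<Rightarrow> 'a \<Rightarrow> 'a" and a b
  assume "\<And>x. h x \<in> M_of f" "\<And>y. (\<lambda>x. h x y) \<in> M_of f" "h a \<notin> \<C>" "(\<lambda>x. h x b) \<notin> \<C>"
  then show "(\<lambda>x. h x x) \<in> M_of f"
    using translations_const_if_M_of_prime_order[OF assms, of h] by blast
qed

section \<open>Minimality of M_of f\<close>

lemma funpow_eq_funpow_if_mod_eq:
  assumes "f ^^ p = id" "m mod p = n mod p"
  shows "f ^^ m = f ^^ n"
proof -
  have "f ^^ k = f ^^ (k mod p)" for k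
    using funpow_mod_eq[of p f] assms(1) by (auto simp: fun_eq_iff)
  then show ?thesis using assms(2) by metis
qed

lemma generator_mem_if_not_T_maps:
  assumes f: "minimal_generator f" and mon: "is_monoid N" and NM: "N \<subseteq> M_of f"
    and g: "g \<in> N" "g \<notin> \<T>"
  shows "f \<in> N"
proof -
  from f consider "f \<circ> f = f \<or> f \<circ> f \<in> \<C>" | p where "prime p" "f ^^ p = id"
    unfolding minimal_generator_def by blast
  then show ?thesis
  proof cases
    case 1
    then have "g = f" using g NM M_of_eq_if_square by (auto simp: T_maps_def)
    then show ?thesis using g by simp
  next
    case (2 p)
    obtain k where k: "g = f ^^ k" using g NM mem_M_of_iff[of g f] by (auto simp: T_maps_def)
    have "\<not> p dvd k"
    proof
      assume "p dvd k"
      then have "g = f ^^ 0" using k funpow_eq_funpow_if_mod_eq[OF 2(2), of k 0] by simp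
      then show False using g(2) by (simp add: T_maps_def)
    qed
    \<comment> \<open>A power of g is f because k is invertible modulo p.\<close>
    then obtain x where "[k * x = 1] (mod p)"
      using cong_solve_coprime_nat prime_imp_coprime[OF 2(1)] coprime_commute by fastforce
    then have "g ^^ x = f"
      using funpow_eq_funpow_if_mod_eq[OF 2(2), of "k * x" 1] by (simp add: k funpow_mult cong_def)
    then show ?thesis using monoid_funpow[OF mon g(1)] by metis
  qed
qed

lemma T_maps_eq_if_subset_M_of:
  assumes "minimal_generator f" "is_monoid N" "\<T> \<subseteq> N" "N \<subset> M_of f"
  shows "N = \<T>"
  using generator_mem_if_not_T_maps[OF assms(1,2)] M_of_subset[OF assms(2,3)] assms(3,4) by blast

lemma diag_closed_M_of:
  fixes f :: "'a::finite \<Rightarrow> 'a"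
  assumes "card (UNIV :: 'a set) \<ge> 3" "minimal_generator f"
  shows "diag_closed (M_of f)"
proof -
  from assms(2) consider "f \<circ> f = f \<or> (f \<circ> f \<in> \<C> \<and> card (UNIV :: 'a set) \<ge> 4)"
    | p where "prime p" "f ^^ p = id" "card {x. f x = x} \<ge> 2 \<or> card (cycles_of_length f p) \<ge> 2"
    unfolding minimal_generator_def by blast
  then show ?thesis
  proof cases
    case 1
    then show ?thesis using diag_closed_if_square M_of_eq_if_square by metis
  next
    case (2 p)
    then show ?thesis using diag_closed_M_of_prime_order[OF assms(1)] by blast
  qed
qed

lemma minimal_u_closed_M_of:
  fixes f :: "'a::finite \<Rightarrow> 'a"
  assumes card3: "card (UNIV :: 'a set) \<ge> 3" and "f \<notin> \<T>" and f: "minimal_generator f"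
  shows "minimal_u_closed (M_of f)" "C_minimal (M_of f)"
proof -
  have "\<T> \<subset> M_of f" using T_maps_subset_M_of mem_M_of assms(2) by blast
  moreover have "u_closed (M_of f)"
    using diag_closed_M_of[OF card3 f] u_closed_iff_diag_closed[OF is_monoid_M_of]
      T_maps_subset_M_of by blast
  moreover have "N = \<T>" if "is_monoid N" "\<T> \<subseteq> N" "N \<subset> M_of f" for N
    using T_maps_eq_if_subset_M_of[OF f that] .
  ultimately show "minimal_u_closed (M_of f)" "C_minimal (M_of f)"
    unfolding minimal_u_closed_def C_minimal_def
    using is_monoid_M_of u_closed_iff_diag_closed by auto
qed

section \<open>Powers of non-injective maps\<close>

lemma funpow_repeats:
  fixes s :: "'a::finite \<Rightarrow> 'a"
  obtains i j where "i < j" "s ^^ i = s ^^ j"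
proof -
  have "\<not> inj (\<lambda>n::nat. s ^^ n)"
    using finite_imageD[of "\<lambda>n::nat. s ^^ n" UNIV] infinite_UNIV_nat by auto
  then obtain i j where "i \<noteq> j" "s ^^ i = s ^^ j" unfolding inj_def by blast
  then show ?thesis using that by (metis nat_neq_iff)
qed

lemma idempotent_funpow:
  fixes s :: "'a::finite \<Rightarrow> 'a"
  obtains m where "0 < m" "s ^^ m \<circ> s ^^ m = s ^^ m"
proof -
  obtain i j where ij: "i < j" "s ^^ i = s ^^ j" by (rule funpow_repeats)
  define d where "d = j - i"
  have period: "s ^^ (n + d) = s ^^ n" if "i \<le> n" for n
  proof -
    have "s ^^ (n + d) = s ^^ (n - i) \<circ> s ^^ j"
      using that ij(1) by (simp add: d_def flip: funpow_add)
    also have "\<dots> = s ^^ n" using that by (simp add: ij(2)[symmetric] flip: funpow_add)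
    finally show ?thesis .
  qed
  have periods: "s ^^ (n + d * t) = s ^^ n" if "i \<le> n" for n t
  proof (induction t)
    case (Suc t)
    have "s ^^ (n + d * Suc t) = s ^^ ((n + d * t) + d)" by (simp add: algebra_simps)
    also have "\<dots> = s ^^ (n + d * t)" using period that by simp
    finally show ?case using Suc by simp
  qed simp
  \<comment> \<open>A multiple of the period beyond the preperiod i is an idempotent exponent.\<close>
  have "1 \<le> d" using ij(1) by (simp add: d_def)
  then have "j \<le> d * j" using mult_le_mono1[of 1 d j] by simp
  then have "i \<le> d * j" using ij(1) by linarith
  then have "s ^^ (d * j) \<circ> s ^^ (d * j) = s ^^ (d * j)"
    using periods[of "d * j" j] by (simp flip: funpow_add)
  moreover have "0 < d * j" using \<open>1 \<le> d\<close> ij(1) by simp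
  ultimately show ?thesis using that by blast
qed

lemma not_inj_funpow:
  fixes s :: "'a \<Rightarrow> 'a"
  assumes "\<not> inj s" "0 < k"
  shows "\<not> inj (s ^^ k)"
proof
  assume "inj (s ^^ k)"
  moreover have "s ^^ k = s ^^ (k - 1) \<circ> s" using assms(2) funpow_Suc_right[of "k - 1" s] by simp
  ultimately have "inj s" using inj_on_imageI2[of "s ^^ (k - 1)" s UNIV] by simp
  then show False using assms(1) by simp
qed

lemma funpow_idempotent_or_square_const:
  fixes s :: "'a::finite \<Rightarrow> 'a"
  assumes "s \<notin> \<C>"
  obtains k where "0 < k" "s ^^ k \<notin> \<C>" "s ^^ k \<circ> s ^^ k = s ^^ k \<or> s ^^ k \<circ> s ^^ k \<in> \<C>"
proof -
  obtain m where m: "0 < m" "s ^^ m \<circ> s ^^ m = s ^^ m" by (rule idempotent_funpow)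
  show ?thesis
  proof (cases "s ^^ m \<in> \<C>")
    case False
    then show ?thesis using that m by blast
  next
    case True
    \<comment> \<open>Take the largest exponent j with s^j non-constant; then s^(2j) is constant.\<close>
    define J where "J = {n. s ^^ n \<notin> \<C>}"
    have "s ^^ n \<in> \<C>" if "m \<le> n" for n
    proof -
      have "s ^^ n = s ^^ (n - m) \<circ> s ^^ m" using that by (simp flip: funpow_add)
      then show ?thesis using True by (auto simp: mem_consts_maps_iff comp_def)
    qed
    then have "J \<subseteq> {..<m}" by (auto simp: J_def not_le[symmetric])
    then have fin: "finite J" by (rule finite_subset) simp
    have "1 \<in> J" using assms by (simp add: J_def)
    define j where "j = Max J"
    have "j \<in> J" using Max_in[OF fin] \<open>1 \<in> J\<close> by (auto simp: j_def)
    have "1 \<le> j" using Max_ge[OF fin \<open>1 \<in> J\<close>] by (simp add: j_def)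
    have "j + j \<notin> J"
    proof
      assume "j + j \<in> J"
      then have "j + j \<le> j" using Max_ge[OF fin] unfolding j_def by blast
      then show False using \<open>1 \<le> j\<close> by simp
    qed
    then have "s ^^ j \<circ> s ^^ j \<in> \<C>" by (simp add: J_def flip: funpow_add)
    then show ?thesis using that[of j] \<open>j \<in> J\<close> \<open>1 \<le> j\<close> by (simp add: J_def)
  qed
qed

lemma idempotent_mem_if_square_const_card3:
  fixes g :: "'a::finite \<Rightarrow> 'a"
  assumes card3: "card (UNIV :: 'a set) = 3" and g: "g \<notin> \<T>" "g \<circ> g \<in> \<C>"
    and TM: "\<T> \<subseteq> M" and dc: "diag_closed M" and gM: "g \<in> M"
  obtains e where "e \<in> M" "e \<notin> \<T>" "e \<circ> e = e"
proof -
  obtain z where gg: "\<And>x. g (g x) = z" using g(2) by (auto simp: mem_consts_maps_iff fun_eq_iff)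
  have gz: "g z = z" using gg[of "g z"] gg[of z] by simp
  obtain u where u: "g u \<noteq> z" using g(1) by (auto simp: mem_T_maps_iff mem_consts_maps_iff)
  define w where "w = g u"
  have gw: "g w = z" using gg by (simp add: w_def)
  have ne: "w \<noteq> z" "u \<noteq> w" "u \<noteq> z"
    using u gz gw unfolding w_def by metis+
  \<comment> \<open>g is the map z, w, u \<mapsto> z, z, w on the three points.\<close>
  have "{z, w, u} = UNIV"
    using card3 ne by (intro card_subset_eq) auto
  then have univ: "x = z \<or> x = w \<or> x = u" for x by blast
  have points: "P x" if "P z" "P w" "P u" for P x
    using univ[of x] that by auto
  define h where "h x y = (if x = z then z else if x = w then g y else y)" for x y
  have "h x \<in> M" for x
    by (rule points[of "\<lambda>x. h x \<in> M"]) (use ne gM T_maps_subsetD[OF TM] in \<open>simp_all add: h_def[abs_def] id_def\<close>)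
  moreover have "(\<lambda>x. h x y) \<in> M" for y
  proof (rule points[of "\<lambda>y. (\<lambda>x. h x y) \<in> M"])
    have "(\<lambda>x. h x z) = (\<lambda>_. z)" using gz by (simp add: h_def fun_eq_iff)
    then show "(\<lambda>x. h x z) \<in> M" using T_maps_subsetD[OF TM] by simp
    have "(\<lambda>x. h x w) = g"
      by (rule ext, rule points) (use gz gw ne in \<open>simp_all add: h_def w_def\<close>)
    then show "(\<lambda>x. h x w) \<in> M" using gM by simp
    have "(\<lambda>x. h x u) = id"
      by (rule ext, rule points) (use ne in \<open>simp_all add: h_def w_def\<close>)
    then show "(\<lambda>x. h x u) \<in> M" using T_maps_subsetD[OF TM] by simp
  qed
  ultimately have eM: "(\<lambda>x. h x x) \<in> M" by (rule diag_closedD[OF dc])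
  define e where "e x = h x x" for x
  have e: "e z = z" "e w = z" "e u = u" using gw ne by (simp_all add: e_def h_def)
  have "e \<noteq> id" using e(2) ne(1) by (metis id_apply)
  moreover have "e \<notin> \<C>"
  proof
    assume "e \<in> \<C>"
    then obtain c where "e = (\<lambda>_. c)" by (auto simp: mem_consts_maps_iff)
    then show False using e(1,3) ne(3) by simp
  qed
  moreover have "e \<circ> e = e" by (rule ext, rule points) (use e in simp_all)
  ultimately show ?thesis using that eM by (simp add: e_def[abs_def] mem_T_maps_iff)
qed

section \<open>Injective maps and cycles\<close>

lemma prime_order_funpow:
  fixes g :: "'a::finite \<Rightarrow> 'a"
  assumes "inj g" "g \<noteq> id"
  obtains k q where "prime q" "(g ^^ k) ^^ q = id" "g ^^ k \<noteq> id"
proof -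
  have "permutation g" using assms(1) by (simp add: permutation bij_def finite_UNIV_inj_surj)
  then obtain n where "g ^^ n = id" "0 < n" by (rule permutation_is_nilpotent)
  then have ex: "\<exists>n. 0 < n \<and> g ^^ n = id" by blast
  define n0 where "n0 = (LEAST n. 0 < n \<and> g ^^ n = id)"
  have n0: "0 < n0" "g ^^ n0 = id" using LeastI_ex[OF ex] by (simp_all add: n0_def)
  have below: "g ^^ n \<noteq> id" if "0 < n" "n < n0" for n
    using not_less_Least[of n "\<lambda>n. 0 < n \<and> g ^^ n = id"] that by (simp add: n0_def)
  have "n0 \<noteq> 1" using n0(2) assms(2) by auto
  then obtain q where q: "prime q" "q dvd n0" using prime_factor_nat by blast
  then obtain k where k: "n0 = k * q" by (metis dvdE mult.commute)
  have "0 < k" "k < n0" using n0(1) k prime_gt_1_nat[OF q(1)] by auto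
  then show ?thesis using that[of q k] q(1) below n0(2) k by (simp add: funpow_mult)
qed

text \<open>On the orbit of x0, identified with the integers modulo its length via i \<mapsto> g^i x0,
  cycle_scale g x0 k acts as multiplication by k; off the orbit it is the identity.
  cycle_index picks an arbitrary exponent, which is harmless by cycle_scale_funpow.\<close>

definition cycle_index :: "('a \<Rightarrow> 'a) \<Rightarrow> 'a \<Rightarrow> 'a \<Rightarrow> nat" where
  "cycle_index g x0 y = (SOME i. (g ^^ i) x0 = y)"

definition cycle_scale :: "('a \<Rightarrow> 'a) \<Rightarrow> 'a \<Rightarrow> nat \<Rightarrow> 'a \<Rightarrow> 'a" where
  "cycle_scale g x0 k y = (if y \<in> orbit_of g x0 then (g ^^ (k * cycle_index g x0 y)) x0 else y)"

lemma funpow_cycle_index: "y \<in> orbit_of g x0 \<Longrightarrow> (g ^^ cycle_index g x0 y) x0 = y"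
  unfolding cycle_index_def orbit_of_def by (rule someI_ex) auto

lemma cycle_scale_funpow:
  assumes perm: "permutation g"
  shows "cycle_scale g x0 k ((g ^^ i) x0) = (g ^^ (k * i)) x0"
proof -
  let ?L = "least_power g x0" and ?j = "cycle_index g x0 ((g ^^ i) x0)"
  have "?j mod ?L = i mod ?L"
    using funpow_cycle_index[of "(g ^^ i) x0" g x0] funpow_eq_funpow_iff_mod_least_power[OF perm]
    by simp
  then have "(k * ?j) mod ?L = (k * i) mod ?L" by (metis mod_mult_right_eq)
  then show ?thesis
    using funpow_eq_funpow_iff_mod_least_power[OF perm] by (simp add: cycle_scale_def)
qed

lemma cycle_scale_Suc:
  assumes "x \<in> orbit_of g x0"
  shows "cycle_scale g x0 (Suc k) x = (g ^^ (k * cycle_index g x0 x)) x"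
proof -
  let ?i = "cycle_index g x0 x"
  have "(g ^^ (k * ?i)) x = (g ^^ (k * ?i)) ((g ^^ ?i) x0)" using funpow_cycle_index[OF assms] by simp
  also have "\<dots> = (g ^^ (k * ?i + ?i)) x0" by (simp add: funpow_add)
  finally show ?thesis using assms by (simp add: cycle_scale_def add.commute)
qed

lemma cycle_scale_mem:
  assumes mon: "is_monoid M" and TM: "\<T> \<subseteq> M"
    and dc: "diag_closed M" and gM: "g \<in> M"
    and fixed: "\<And>y. y \<notin> orbit_of g x0 \<Longrightarrow> g y = y"
    and single: "\<And>y z. y \<notin> orbit_of g x0 \<Longrightarrow> z \<notin> orbit_of g x0 \<Longrightarrow> y = z"
    and "0 < k"
  shows "cycle_scale g x0 k \<in> M"
  using \<open>0 < k\<close>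
proof (induction k rule: nat_induct_non_zero)
  case 1
  have "cycle_scale g x0 1 = id" by (auto simp: cycle_scale_def fun_eq_iff funpow_cycle_index)
  then show ?case using T_maps_subsetD(1)[OF TM] by (simp only: One_nat_def)
next
  case (Suc k)
  let ?O = "orbit_of g x0" and ?i = "cycle_index g x0"
  define h where "h x y = (if y \<in> ?O then (g ^^ (k * ?i y)) x else y)" for x y
  have "h x \<in> M" for x
  proof (cases "x \<in> ?O")
    case True
    have "h x y = (g ^^ ?i x) (cycle_scale g x0 k y)" for y
      using funpow_cycle_index[OF True] fixed[of y] funpow_fixed[of g y]
        funpow_commute_apply[where f=g and m="k * ?i y" and n="?i x" and x=x0]
      by (auto simp: h_def cycle_scale_def)
    then have "h x = g ^^ ?i x \<circ> cycle_scale g x0 k" by auto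
    then show ?thesis using monoid_comp[OF mon monoid_funpow[OF mon gM] Suc.IH] by simp
  next
    case False
    then have "h x = (\<lambda>_. x)"
      using fixed funpow_fixed[of g x] single by (auto simp: h_def fun_eq_iff)
    then show ?thesis using T_maps_subsetD[OF TM] by simp
  qed
  moreover have "(\<lambda>x. h x y) \<in> M" for y
  proof (cases "y \<in> ?O")
    case True
    then show ?thesis using monoid_funpow[OF mon gM] by (simp add: h_def)
  next
    case False
    then show ?thesis using T_maps_subsetD[OF TM] by (simp add: h_def)
  qed
  ultimately have "(\<lambda>x. h x x) \<in> M" by (rule diag_closedD[OF dc])
  moreover have "(\<lambda>x. h x x) = cycle_scale g x0 (Suc k)"
    by (auto simp: fun_eq_iff h_def cycle_scale_Suc) (simp add: cycle_scale_def)
  ultimately show ?case by simp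
qed

definition cycle_square :: "('a \<Rightarrow> 'a) \<Rightarrow> 'a \<Rightarrow> 'a \<Rightarrow> 'a" where
  "cycle_square g x0 y = cycle_scale g x0 (cycle_index g x0 y) y"

lemma cycle_square_funpow:
  assumes perm: "permutation g"
  shows "cycle_square g x0 ((g ^^ i) x0) = (g ^^ (i * i)) x0"
proof -
  define j where "j = cycle_index g x0 ((g ^^ i) x0)"
  have "cycle_square g x0 ((g ^^ i) x0) = (g ^^ (i * j)) x0"
    using cycle_scale_funpow[OF perm, where k=j and i=i] by (simp add: cycle_square_def j_def mult.commute)
  also have "\<dots> = cycle_scale g x0 i ((g ^^ j) x0)"
    using cycle_scale_funpow[OF perm, where k=i and i=j] by simp
  also have "\<dots> = (g ^^ (i * i)) x0"
    using funpow_cycle_index[of "(g ^^ i) x0" g x0] cycle_scale_funpow[OF perm, where k=i and i=i]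
    by (simp add: j_def)
  finally show ?thesis .
qed

lemma outside_orbit_fixed_and_unique:
  fixes g :: "'a::finite \<Rightarrow> 'a"
  assumes p: "prime p" and gp: "g ^^ p = id" and gx0: "g x0 \<noteq> x0"
    and fix1: "\<not> card {x. g x = x} \<ge> 2" and cyc1: "\<not> card (cycles_of_length g p) \<ge> 2"
  shows "y \<notin> orbit_of g x0 \<Longrightarrow> g y = y"
    and "y \<notin> orbit_of g x0 \<Longrightarrow> z \<notin> orbit_of g x0 \<Longrightarrow> y = z"
proof -
  have perm: "permutation g" using permutation_if_funpow_eq_id[OF gp prime_gt_0_nat[OF p]] .
  have cycle: "orbit_of g x \<in> cycles_of_length g p" if "g x \<noteq> x" for x
    using card_orbit_of[OF perm] least_power_eq_prime[OF p gp that]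
    unfolding cycles_of_length_def by blast
  have fixed: "g y = y" if y: "y \<notin> orbit_of g x0" for y
  proof (rule ccontr)
    assume "g y \<noteq> y"
    then have "{orbit_of g y, orbit_of g x0} \<subseteq> cycles_of_length g p" using cycle gx0 by blast
    then have "card {orbit_of g y, orbit_of g x0} \<le> card (cycles_of_length g p)"
      by (rule card_mono[OF finite])
    moreover have "orbit_of g y \<noteq> orbit_of g x0" using y self_mem_orbit_of[of y g] by auto
    ultimately have "card (cycles_of_length g p) \<ge> 2" by simp
    then show False using cyc1 by simp
  qed
  show "g y = y" if "y \<notin> orbit_of g x0" using fixed[OF that] .
  show "y = z" if "y \<notin> orbit_of g x0" "z \<notin> orbit_of g x0"
    using fixed[OF that(1)] fixed[OF that(2)] fix1 card_le_Suc0_iff_eq[of "{x. g x = x}"] by auto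
qed

lemma cycle_scale_period_not_inj:
  assumes perm: "permutation g" and gp: "g ^^ p = id" and gx0: "g x0 \<noteq> x0"
    and w: "w \<notin> orbit_of g x0"
  shows "\<not> inj (cycle_scale g x0 p)" "cycle_scale g x0 p \<notin> \<C>"
proof -
  have at: "cycle_scale g x0 p ((g ^^ i) x0) = x0" for i
  proof -
    have "g ^^ (p * i) = id" by (simp add: funpow_mult[symmetric] gp)
    then show ?thesis using cycle_scale_funpow[OF perm, where k=p and i=i] by simp
  qed
  show "\<not> inj (cycle_scale g x0 p)"
  proof
    assume "inj (cycle_scale g x0 p)"
    moreover have "cycle_scale g x0 p x0 = cycle_scale g x0 p (g x0)" using at[of 0] at[of 1] by simp
    ultimately have "x0 = g x0" by (rule injD)
    then show False using gx0 by simp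
  qed
  show "cycle_scale g x0 p \<notin> \<C>"
  proof
    assume "cycle_scale g x0 p \<in> \<C>"
    then obtain c where c: "cycle_scale g x0 p = (\<lambda>_. c)" by (auto simp: mem_consts_maps_iff)
    have "cycle_scale g x0 p w = w" using w by (simp add: cycle_scale_def)
    then have "w = x0" using fun_cong[OF c, of w] fun_cong[OF c, of x0] at[of 0] by simp
    then show False using w self_mem_orbit_of[of x0 g] by simp
  qed
qed

lemma cycle_square_not_inj:
  fixes g :: "'a::finite \<Rightarrow> 'a"
  assumes card3: "card (UNIV :: 'a set) \<ge> 3" and p: "prime p" and gp: "g ^^ p = id"
    and gx0: "g x0 \<noteq> x0" and whole: "orbit_of g x0 = UNIV"
  shows "\<not> inj (cycle_square g x0)" "cycle_square g x0 \<notin> \<C>"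
proof -
  have perm: "permutation g" using permutation_if_funpow_eq_id[OF gp prime_gt_0_nat[OF p]] .
  have L: "least_power g x0 = p" using least_power_eq_prime[OF p gp gx0] .
  then have "p = card (UNIV :: 'a set)" using card_orbit_of[OF perm, of x0] whole by simp
  then have p3: "p \<ge> 3" using card3 by simp
  have sq: "cycle_square g x0 ((g ^^ i) x0) = (g ^^ (i * i)) x0" for i
    using cycle_square_funpow[OF perm] .
  have iff: "(g ^^ i) x0 = (g ^^ j) x0 \<longleftrightarrow> i mod p = j mod p" for i j
    using funpow_eq_funpow_iff_mod_least_power[OF perm] L by simp
  \<comment> \<open>Squaring modulo p \<ge> 3 identifies 1 and p - 1.\<close>
  define q where "q = p - 2"
  have q: "p = q + 2" using p3 by (simp add: q_def)
  have "(p - 1) * (p - 1) = 1 + q * p" unfolding q by (simp add: algebra_simps)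
  then have "((p - 1) * (p - 1)) mod p = 1 mod p" by (simp only: mod_mult_self1)
  then have "cycle_square g x0 ((g ^^ (p - 1)) x0) = (g ^^ 1) x0"
    unfolding sq by (simp only: iff)
  moreover have "(g ^^ (p - 1)) x0 \<noteq> (g ^^ 1) x0" using p3 by (simp only: iff) simp
  moreover have "cycle_square g x0 ((g ^^ 1) x0) = (g ^^ 1) x0" using sq[of 1] by simp
  ultimately show "\<not> inj (cycle_square g x0)" by (metis injD)
  show "cycle_square g x0 \<notin> \<C>"
    using sq[of 0] sq[of 1] gx0 by (auto simp: mem_consts_maps_iff)
qed

lemma not_inj_mem_if_prime_order:
  fixes g :: "'a::finite \<Rightarrow> 'a"
  assumes card3: "card (UNIV :: 'a set) \<ge> 3" and p: "prime p" and gp: "g ^^ p = id"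
    and g: "g \<noteq> id" "\<not> card {x. g x = x} \<ge> 2" "\<not> card (cycles_of_length g p) \<ge> 2"
    and mon: "is_monoid M" and TM: "\<T> \<subseteq> M" and dc: "diag_closed M" and gM: "g \<in> M"
  obtains s where "s \<in> M" "\<not> inj s" "s \<notin> \<C>"
proof -
  obtain x0 where gx0: "g x0 \<noteq> x0" using g(1) by (auto simp: fun_eq_iff)
  have perm: "permutation g" using permutation_if_funpow_eq_id[OF gp prime_gt_0_nat[OF p]] .
  have scale: "cycle_scale g x0 k \<in> M" if "0 < k" for k
    using cycle_scale_mem[OF mon TM dc gM outside_orbit_fixed_and_unique[OF p gp gx0 g(2,3)] that] .
  show ?thesis
  proof (cases "orbit_of g x0 = UNIV")
    case False
    then obtain w where "w \<notin> orbit_of g x0" by blast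
    then show ?thesis
      using that scale[OF prime_gt_0_nat[OF p]] cycle_scale_period_not_inj[OF perm gp gx0] by blast
  next
    case True
    have "cycle_scale g x0 k \<in> M" for k
    proof (cases "k = 0")
      case True
      then have "cycle_scale g x0 k = (\<lambda>_. x0)" using \<open>orbit_of g x0 = UNIV\<close>
        by (simp add: cycle_scale_def fun_eq_iff)
      then show ?thesis using T_maps_subsetD[OF TM] by simp
    qed (use scale in simp)
    moreover have "(\<lambda>x. cycle_scale g x0 (cycle_index g x0 x) y) = cycle_scale g x0 (cycle_index g x0 y)" for y
      using True by (simp add: cycle_scale_def fun_eq_iff mult.commute)
    ultimately have "cycle_square g x0 \<in> M"
      using diag_closedD[OF dc, of "\<lambda>x. cycle_scale g x0 (cycle_index g x0 x)"]
      by (simp add: cycle_square_def[abs_def])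
    then show ?thesis using that cycle_square_not_inj[OF card3 p gp gx0 True] by blast
  qed
qed

section \<open>Classification of minimal u-closed monoids\<close>

lemma not_const_if_inj:
  fixes g :: "'a::finite \<Rightarrow> 'a"
  assumes "card (UNIV :: 'a set) \<ge> 2" "inj g"
  shows "g \<notin> \<C>"
proof
  assume "g \<in> \<C>"
  then obtain c where "g = (\<lambda>_. c)" by (auto simp: mem_consts_maps_iff)
  then have "x = y" for x y :: 'a using assms(2) by (auto dest: injD)
  then show False using assms(1) card_le_Suc0_iff_eq[of "UNIV :: 'a set"] by auto
qed

lemma not_inj_if_idempotent: "e \<circ> e = e \<Longrightarrow> e \<noteq> id \<Longrightarrow> \<not> inj e"
  by (metis comp_apply eq_id_iff injD)

lemma M_of_eq_if_minimal_u_closed: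
  fixes f :: "'a::finite \<Rightarrow> 'a"
  assumes M: "minimal_u_closed M" and card3: "card (UNIV :: 'a set) \<ge> 3"
    and f: "f \<in> M" "f \<notin> \<T>" "minimal_generator f"
  shows "M = M_of f"
proof -
  have "is_monoid M" "\<T> \<subseteq> M"
    and minimal: "\<And>N. is_monoid N \<Longrightarrow> u_closed N \<Longrightarrow> N \<subset> M \<Longrightarrow> N = \<T>"
    using M unfolding minimal_u_closed_def by auto
  then have "M_of f \<subseteq> M" using M_of_subset f(1) by blast
  moreover have "M_of f \<noteq> \<T>" using mem_M_of f(2) by blast
  ultimately show ?thesis
    using minimal[OF is_monoid_M_of] minimal_u_closed_M_of(1)[OF card3 f(2,3)]
    unfolding minimal_u_closed_def by blast
qed

lemma minimal_u_closed_eq_M_of_not_inj: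
  fixes s :: "'a::finite \<Rightarrow> 'a"
  assumes M: "minimal_u_closed M" and card3: "card (UNIV :: 'a set) \<ge> 3"
    and s: "s \<in> M" "\<not> inj s" "s \<notin> \<C>"
  obtains e where "\<not> inj e" "e \<notin> \<T>" "M = M_of e" "minimal_generator e"
proof -
  have mon: "is_monoid M" and TM: "\<T> \<subseteq> M" and dc: "diag_closed M"
    using M u_closed_iff_diag_closed unfolding minimal_u_closed_def by auto
  obtain k where k: "0 < k" "s ^^ k \<notin> \<C>" "s ^^ k \<circ> s ^^ k = s ^^ k \<or> s ^^ k \<circ> s ^^ k \<in> \<C>"
    using funpow_idempotent_or_square_const[OF s(3)] by blast
  define e0 where "e0 = s ^^ k"
  have e0: "e0 \<in> M" "\<not> inj e0" "e0 \<notin> \<T>"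
    using monoid_funpow[OF mon s(1)] not_inj_funpow[OF s(2) k(1)] k(2)
    by (auto simp: e0_def mem_T_maps_iff)
  show ?thesis
  proof (cases "e0 \<circ> e0 = e0 \<or> (e0 \<circ> e0 \<in> \<C> \<and> card (UNIV :: 'a set) \<ge> 4)")
    case True
    then have "minimal_generator e0" by (auto simp: minimal_generator_def)
    then show ?thesis using that e0 M_of_eq_if_minimal_u_closed[OF M card3 e0(1,3)] by blast
  next
    case False
    then have "e0 \<circ> e0 \<in> \<C>" "card (UNIV :: 'a set) = 3" using k(3) card3 by (auto simp: e0_def)
    then obtain e where e: "e \<in> M" "e \<notin> \<T>" "e \<circ> e = e"
      using idempotent_mem_if_square_const_card3 TM dc e0 by blast
    then have "minimal_generator e" "\<not> inj e"
      using not_inj_if_idempotent by (auto simp: minimal_generator_def mem_T_maps_iff)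
    then show ?thesis using that e M_of_eq_if_minimal_u_closed[OF M card3 e(1,2)] by blast
  qed
qed

lemma inj_mem_M_of_not_inj:
  fixes e :: "'a::finite \<Rightarrow> 'a"
  assumes "card (UNIV :: 'a set) \<ge> 2" "\<not> inj e" "g \<in> M_of e" "inj g"
  shows "g = id"
proof -
  have "g \<notin> \<C>" using not_const_if_inj assms(1,4) by blast
  then obtain n where n: "g = e ^^ n" using assms(3) by (auto simp: mem_M_of_iff)
  then have "\<not> 0 < n" using not_inj_funpow[OF assms(2)] assms(4) by blast
  then show ?thesis using n by simp
qed

lemma minimal_u_closed_eq_M_of_inj:
  fixes g :: "'a::finite \<Rightarrow> 'a"
  assumes M: "minimal_u_closed M" and card3: "card (UNIV :: 'a set) \<ge> 3"
    and g: "g \<in> M" "inj g" "g \<noteq> id"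
  obtains f where "f \<notin> \<T>" "M = M_of f" "minimal_generator f"
proof -
  have mon: "is_monoid M" and TM: "\<T> \<subseteq> M" and dc: "diag_closed M"
    using M u_closed_iff_diag_closed unfolding minimal_u_closed_def by auto
  obtain k q where q: "prime q" "(g ^^ k) ^^ q = id" "g ^^ k \<noteq> id"
    using prime_order_funpow[OF g(2,3)] by blast
  define g' where "g' = g ^^ k"
  have g': "g' \<in> M" "inj g'" "g' \<notin> \<T>"
    using monoid_funpow[OF mon g(1)] g(2) q(3) not_const_if_inj[of "g ^^ k"] card3
    by (auto simp: g'_def mem_T_maps_iff)
  show ?thesis
  proof (cases "card {x. g' x = x} \<ge> 2 \<or> card (cycles_of_length g' q) \<ge> 2")
    case True
    then have "minimal_generator g'" using q by (auto simp: minimal_generator_def g'_def)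
    then show ?thesis using that g' M_of_eq_if_minimal_u_closed[OF M card3 g'(1,3)] by blast
  next
    case False
    \<comment> \<open>Then M is generated by a non-injective map, whose only injective power is id.\<close>
    then obtain s where "s \<in> M" "\<not> inj s" "s \<notin> \<C>"
      using not_inj_mem_if_prime_order[OF card3 q(1) _ _ _ _ mon TM dc g'(1)] q(2,3)
      by (auto simp: g'_def)
    then obtain e where e: "\<not> inj e" "M = M_of e"
      using minimal_u_closed_eq_M_of_not_inj[OF M card3] by metis
    have "card (UNIV :: 'a set) \<ge> 2" using card3 by simp
    then have "g' = id" using inj_mem_M_of_not_inj e g'(1,2) by blast
    then show ?thesis using g'(3) by (simp add: mem_T_maps_iff)
  qed
qed

lemma minimal_u_closed_eq_M_of:
  fixes M :: "('a::finite \<Rightarrow> 'a) set"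
  assumes card3: "card (UNIV :: 'a set) \<ge> 3" and M: "minimal_u_closed M"
  obtains f where "f \<notin> \<T>" "M = M_of f" "minimal_generator f"
proof -
  obtain g where g: "g \<in> M" "g \<notin> \<T>" using M unfolding minimal_u_closed_def by blast
  show ?thesis
  proof (cases "inj g")
    case False
    then show ?thesis
      using minimal_u_closed_eq_M_of_not_inj[OF M card3 g(1)] g(2) that
      by (auto simp: mem_T_maps_iff)
  next
    case True
    then show ?thesis
      using minimal_u_closed_eq_M_of_inj[OF M card3 g(1)] g(2) that
      by (auto simp: mem_T_maps_iff)
  qed
qed

theorem theorem5p3:
  fixes dummy :: "'a::finite"
  assumes "card (UNIV :: 'a set) \<ge> 3"
  shows "(\<forall>M :: ('a \<Rightarrow> 'a) set. minimal_u_closed M \<longleftrightarrow>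
            (\<exists>f. f \<notin> \<T> \<and> M = M_of f \<and>
               (f \<circ> f = f
                \<or> (f \<circ> f \<in> \<C> \<and> card (UNIV :: 'a set) \<ge> 4)
                \<or> (\<exists>p. prime p \<and> f ^^ p = id \<and>
                      (card {x. f x = x} \<ge> 2 \<or> card (cycles_of_length f p) \<ge> 2)))))
      \<and> (\<forall>M :: ('a \<Rightarrow> 'a) set. minimal_u_closed M \<longrightarrow> C_minimal M)"
proof -
  have "minimal_u_closed M \<longleftrightarrow> (\<exists>f. f \<notin> \<T> \<and> M = M_of f \<and> minimal_generator f)"
    for M :: "('a \<Rightarrow> 'a) set"
    using minimal_u_closed_eq_M_of[OF assms] minimal_u_closed_M_of(1)[OF assms] by metis
  moreover have "minimal_u_closed M \<longrightarrow> C_minimal M" for M :: "('a \<Rightarrow> 'a) set"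
    using minimal_u_closed_eq_M_of[OF assms] minimal_u_closed_M_of(2)[OF assms] by metis
  ultimately show ?thesis unfolding minimal_generator_def by blast
qed

end
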